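(* Let $E=\mathcal O(0,1,1)\oplus\mathcal O(1,0,1)\oplus\mathcal O(1,1,0)$ on $\mathbb P^1\times\mathbb P^1\times\mathbb P^1$. The discriminant locus $\Delta\subseteq\mathbb P H^0(E)\cong\mathbb P^{11}$ of $E$ is an irreducible hypersurface of degree $6$.
   Context: The discriminant locus is $\Delta=\{[f]\in\mathbb P H^0(\mathbb P^1\times\mathbb P^1\times\mathbb P^1,E) : \mathcal Z(f)\text{ is not reduced of dimension }0\}$, where $\mathcal Z(f)$ is the zero scheme of $f$. A section is $f=(f^{(1)},f^{(2)},f^{(3)})$ with $f^{(i)}$ a bilinear form in the two coordinate pairs $\pi^{(l)}=(\pi^{(l)}_1,\pi^{(l)}_2)$, $l\ne i$. (This is the discriminant relevant to three-player games with two strategies each.) *)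

theory Defs
  imports Complex_Main "HOL-Library.Poly_Mapping" "HOL-Computational_Algebra.Factorial_Ring"
begin

type_synonym cmpoly = "(nat \<Rightarrow>\<^sub>0 nat) \<Rightarrow>\<^sub>0 complex"

definition mon_eval :: "(nat \<Rightarrow>\<^sub>0 nat) \<Rightarrow> (nat \<Rightarrow> complex) \<Rightarrow> complex" where
  "mon_eval m a = (\<Prod>i\<in>Poly_Mapping.keys m. a i ^ Poly_Mapping.lookup m i)"

definition mp_eval :: "cmpoly \<Rightarrow> (nat \<Rightarrow> complex) \<Rightarrow> complex" where
  "mp_eval p a = (\<Sum>m\<in>Poly_Mapping.keys p. Poly_Mapping.lookup p m * mon_eval m a)"

definition mon_degree :: "(nat \<Rightarrow>\<^sub>0 nat) \<Rightarrow> nat" where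
  "mon_degree m = (\<Sum>i\<in>Poly_Mapping.keys m. Poly_Mapping.lookup m i)"

definition mp_vars_below :: "nat \<Rightarrow> cmpoly \<Rightarrow> bool" where
  "mp_vars_below n p \<longleftrightarrow> (\<forall>m\<in>Poly_Mapping.keys p. Poly_Mapping.keys m \<subseteq> {..<n})"

definition mp_homogeneous :: "nat \<Rightarrow> cmpoly \<Rightarrow> bool" where
  "mp_homogeneous d p \<longleftrightarrow> p \<noteq> 0 \<and> (\<forall>m\<in>Poly_Mapping.keys p. mon_degree m = d)"

text \<open>A section f = (f1,f2,f3) is given by its 12 coefficients a_0..a_11:
  f^{(i+1)}(p,q) = sum_{j,k<2} a(4i+2j+k) p_j q_k  (i = 0,1,2),
where f^{(1)} is bilinear in (pi2,pi3), f^{(2)} in (pi1,pi3), f^{(3)} in (pi1,pi2).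
Coordinate pairs pi^{(l)} are functions nat => complex, only indices 0,1 used.\<close>

definition bil :: "(nat \<Rightarrow> complex) \<Rightarrow> nat \<Rightarrow> (nat \<Rightarrow> complex) \<Rightarrow> (nat \<Rightarrow> complex) \<Rightarrow> complex" where
  "bil a i p q = (\<Sum>j<2. \<Sum>k<2. a (4*i + 2*j + k) * p j * q k)"

definition nonzero2 :: "(nat \<Rightarrow> complex) \<Rightarrow> bool" where
  "nonzero2 x \<longleftrightarrow> x 0 \<noteq> 0 \<or> x 1 \<noteq> 0"

definition in_zero_set :: "(nat \<Rightarrow> complex) \<Rightarrow> (nat \<Rightarrow> complex) \<Rightarrow> (nat \<Rightarrow> complex) \<Rightarrow> (nat \<Rightarrow> complex) \<Rightarrow> bool" where
  "in_zero_set a x y z \<longleftrightarrow> nonzero2 x \<and> nonzero2 y \<and> nonzero2 z \<and>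
     bil a 0 y z = 0 \<and> bil a 1 x z = 0 \<and> bil a 2 x y = 0"

text \<open>Z(f) is non-reduced or positive dimensional at the point (x,y,z): the differential of f
at the zero (x,y,z) has a nonzero kernel on the tangent space, i.e. there is a tangent
vector (u,v,w) in C^6, not in the span of the Euler directions (x,0,0),(0,y,0),(0,0,z),
annihilated by df.\<close>
definition singular_zero :: "(nat \<Rightarrow> complex) \<Rightarrow> (nat \<Rightarrow> complex) \<Rightarrow> (nat \<Rightarrow> complex) \<Rightarrow> (nat \<Rightarrow> complex) \<Rightarrow> bool" where
  "singular_zero a x y z \<longleftrightarrow> in_zero_set a x y z \<and>
     (\<exists>u v w. bil a 0 v z + bil a 0 y w = 0 \<and>
              bil a 1 u z + bil a 1 x w = 0 \<and>
              bil a 2 u y + bil a 2 x v = 0 \<and>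
              \<not> (\<exists>s t r. \<forall>j<2. u j = s * x j \<and> v j = t * y j \<and> w j = r * z j))"

text \<open>The discriminant locus (as a cone in C^12 minus 0): nonzero sections whose zero scheme
is not reduced of dimension 0.\<close>
definition discriminant :: "(nat \<Rightarrow> complex) set" where
  "discriminant = {a. (\<exists>i<12. a i \<noteq> 0) \<and> (\<exists>x y z. singular_zero a x y z)}"

end

theory Submission
  imports Defs "HOL-Computational_Algebra.Fundamental_Theorem_Algebra"
begin

text \<open>Write the section as f1(y,z) = y^T A z, f2(x,z) = x^T B z, f3(x,y) = x^T C y, and let
  perp (p0, p1) = (p1, -p0).  Where A z and B z are nonzero, the first two equations force y and x
  to be multiples of perp (A z) and perp (B z), and the third becomes Q(z) = 0 for the binary
  quadratic form Q(z) = f3(perp (B z), perp (A z)).  Solving the tangent equations shows that a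
  zero is singular exactly when the gradient of Q vanishes at z, i.e. z is a double root of Q; the
  cases A z = 0 and B z = 0 are treated separately, the second reduced to the first by exchanging
  x and y.  Hence the discriminant locus is cut out by the sextic D = disc Q.

  The factors of the homogeneous D are homogeneous.  On the family of sections
  a = \<alpha> + t \<beta> + s \<gamma> below, D becomes (t^3 - 1)^2 - 4 t^2 s, of degree 1 in s, so one factor G does
  not involve s and divides the coprime polynomials (t^3 - 1)^2 and t^2.  But the coefficient of
  t^d, d = deg G, in G(\<alpha> + t \<beta>) is G(\<beta>), which is nonzero since D(\<beta>) = 1; so d = 0 and G is a
  unit.\<close>

section \<open>Evaluating multivariate polynomials along ring homomorphisms\<close>

locale comm_ring_hom =
  fixes h :: "'a::comm_ring_1 \<Rightarrow> 'b::comm_ring_1"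
  assumes hom_add: "h (x + y) = h x + h y"
    and hom_mult: "h (x * y) = h x * h y"
    and hom_one: "h 1 = 1"
begin

lemma hom_zero [simp]: "h 0 = 0"
  using hom_add[of 0 0] by simp

lemma hom_uminus: "h (- x) = - h x"
  using hom_add[of x "- x"] by (simp add: eq_neg_iff_add_eq_0 add.commute)

lemma hom_diff: "h (x - y) = h x - h y"
  using hom_add[of x "- y"] by (simp add: hom_uminus)

lemma hom_sum: "h (sum f A) = (\<Sum>a\<in>A. h (f a))"
  by (induction A rule: infinite_finite_induct) (simp_all add: hom_add)

lemma hom_prod: "h (prod f A) = (\<Prod>a\<in>A. h (f a))"
  by (induction A rule: infinite_finite_induct) (simp_all add: hom_one hom_mult)

lemma hom_power: "h (x ^ n) = h x ^ n"
  by (induction n) (simp_all add: hom_one hom_mult)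

lemma hom_numeral: "h (numeral n) = numeral n"
proof -
  have "h (of_nat n) = of_nat n" for n
    by (induction n) (simp_all add: hom_one hom_add)
  from this[of "numeral n"] show ?thesis by simp
qed

end

lemma comm_ring_hom_id: "comm_ring_hom id"
  by unfold_locales simp_all

lemma comm_ring_hom_comp: "comm_ring_hom h \<Longrightarrow> comm_ring_hom f \<Longrightarrow> comm_ring_hom (f \<circ> h)"
  by (simp add: comm_ring_hom_def)

lemma comm_ring_hom_const_poly: "comm_ring_hom (\<lambda>c. [:c:])"
  by unfold_locales (simp_all add: one_pCons)

lemma comm_ring_hom_poly_at_0: "comm_ring_hom (\<lambda>p. poly p 0)"
  by unfold_locales simp_all

definition eval_mon :: "('v \<Rightarrow> 'b::comm_ring_1) \<Rightarrow> ('v \<Rightarrow>\<^sub>0 nat) \<Rightarrow> 'b" where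
  "eval_mon v m = (\<Prod>i\<in>Poly_Mapping.keys m. v i ^ Poly_Mapping.lookup m i)"

definition eval_mpoly ::
    "('a::zero \<Rightarrow> 'b::comm_ring_1) \<Rightarrow> ('v \<Rightarrow> 'b) \<Rightarrow> (('v \<Rightarrow>\<^sub>0 nat) \<Rightarrow>\<^sub>0 'a) \<Rightarrow> 'b" where
  "eval_mpoly h v p = (\<Sum>m\<in>Poly_Mapping.keys p. h (Poly_Mapping.lookup p m) * eval_mon v m)"

definition mvar :: "'v \<Rightarrow> ('v \<Rightarrow>\<^sub>0 nat) \<Rightarrow>\<^sub>0 'a::comm_ring_1" where
  "mvar i = Poly_Mapping.single (Poly_Mapping.single i 1) 1"

lemma mp_eval_eq_eval_mpoly: "mp_eval p a = eval_mpoly id a p"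
  by (simp add: mp_eval_def eval_mpoly_def mon_eval_def eval_mon_def)

lemma poly_mapping_sum_single:
  "p = (\<Sum>m\<in>Poly_Mapping.keys p. Poly_Mapping.single m (Poly_Mapping.lookup p m))"
  by (rule poly_mapping_eqI) (simp add: lookup_sum lookup_single when_def in_keys_iff)

lemma eval_mon_superset:
  assumes "finite S" "Poly_Mapping.keys m \<subseteq> S"
  shows "eval_mon v m = (\<Prod>i\<in>S. v i ^ Poly_Mapping.lookup m i)"
  unfolding eval_mon_def by (rule prod.mono_neutral_left[OF assms]) (simp add: in_keys_iff)

lemma eval_mon_zero [simp]: "eval_mon v 0 = 1"
  by (simp add: eval_mon_def)

lemma eval_mon_add: "eval_mon v (m + n) = eval_mon v m * eval_mon v n"
proof -
  let ?S = "Poly_Mapping.keys m \<union> Poly_Mapping.keys n"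
  have "eval_mon v (m + n) = (\<Prod>i\<in>?S. v i ^ Poly_Mapping.lookup (m + n) i)"
    by (rule eval_mon_superset) (simp_all add: keys_add)
  also have "\<dots> = (\<Prod>i\<in>?S. v i ^ Poly_Mapping.lookup m i) * (\<Prod>i\<in>?S. v i ^ Poly_Mapping.lookup n i)"
    by (simp add: lookup_add power_add prod.distrib)
  also have "\<dots> = eval_mon v m * eval_mon v n"
    by (simp add: eval_mon_superset[of ?S])
  finally show ?thesis .
qed

context comm_ring_hom
begin

lemma eval_mpoly_superset:
  assumes "finite S" "Poly_Mapping.keys p \<subseteq> S"
  shows "eval_mpoly h v p = (\<Sum>m\<in>S. h (Poly_Mapping.lookup p m) * eval_mon v m)"
  unfolding eval_mpoly_def by (rule sum.mono_neutral_left[OF assms]) (simp add: in_keys_iff)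

lemma eval_mpoly_add: "eval_mpoly h v (p + q) = eval_mpoly h v p + eval_mpoly h v q"
proof -
  let ?S = "Poly_Mapping.keys p \<union> Poly_Mapping.keys q"
  have "eval_mpoly h v (p + q) = (\<Sum>m\<in>?S. h (Poly_Mapping.lookup (p + q) m) * eval_mon v m)"
    by (rule eval_mpoly_superset) (simp_all add: keys_add)
  also have "\<dots> = (\<Sum>m\<in>?S. h (Poly_Mapping.lookup p m) * eval_mon v m)
                 + (\<Sum>m\<in>?S. h (Poly_Mapping.lookup q m) * eval_mon v m)"
    by (simp add: lookup_add hom_add distrib_right sum.distrib)
  also have "\<dots> = eval_mpoly h v p + eval_mpoly h v q"
    by (simp add: eval_mpoly_superset[of ?S])
  finally show ?thesis .
qed

lemma eval_mpoly_single: "eval_mpoly h v (Poly_Mapping.single m c) = h c * eval_mon v m"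
  by (cases "c = 0") (simp_all add: eval_mpoly_def)

lemma eval_mpoly_zero [simp]: "eval_mpoly h v 0 = 0"
  by (simp add: eval_mpoly_def)

lemma eval_mpoly_sum: "eval_mpoly h v (sum f A) = (\<Sum>a\<in>A. eval_mpoly h v (f a))"
  by (induction A rule: infinite_finite_induct) (simp_all add: eval_mpoly_add)

lemma eval_mpoly_mult: "eval_mpoly h v (p * q) = eval_mpoly h v p * eval_mpoly h v q"
proof -
  let ?p = "Poly_Mapping.lookup p" and ?q = "Poly_Mapping.lookup q"
  have "p * q = (\<Sum>m\<in>Poly_Mapping.keys p. \<Sum>n\<in>Poly_Mapping.keys q.
      Poly_Mapping.single (m + n) (?p m * ?q n))"
    by (subst (1 2) poly_mapping_sum_single) (simp add: sum_product mult_single)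
  then have "eval_mpoly h v (p * q) =
      (\<Sum>m\<in>Poly_Mapping.keys p. \<Sum>n\<in>Poly_Mapping.keys q.
        (h (?p m) * eval_mon v m) * (h (?q n) * eval_mon v n))"
    by (simp add: eval_mpoly_sum eval_mpoly_single hom_mult eval_mon_add mult_ac)
  also have "\<dots> = eval_mpoly h v p * eval_mpoly h v q"
    by (simp add: eval_mpoly_def sum_product)
  finally show ?thesis .
qed

lemma eval_mpoly_one: "eval_mpoly h v 1 = 1"
  using eval_mpoly_single[of v 0 1] by (simp add: hom_one)

lemma eval_mpoly_uminus: "eval_mpoly h v (- p) = - eval_mpoly h v p"
  by (simp add: eval_mpoly_def hom_uminus sum_negf)

lemma eval_mpoly_diff: "eval_mpoly h v (p - q) = eval_mpoly h v p - eval_mpoly h v q"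
  using eval_mpoly_add[of v p "- q"] by (simp add: eval_mpoly_uminus)

lemma eval_mpoly_numeral: "eval_mpoly h v (numeral n) = numeral n"
  using eval_mpoly_single[of v 0 "numeral n"] by (simp add: hom_numeral)

lemma eval_mpoly_mvar: "eval_mpoly h v (mvar i) = v i"
  by (simp add: mvar_def eval_mpoly_single hom_one eval_mon_def)

lemmas eval_mpoly_ring_simps =
  eval_mpoly_add eval_mpoly_diff eval_mpoly_mult eval_mpoly_numeral eval_mpoly_mvar

lemma eval_mpoly_comp:
  assumes "comm_ring_hom f"
  shows "f (eval_mpoly h v p) = eval_mpoly (f \<circ> h) (f \<circ> v) p"
proof -
  interpret f: comm_ring_hom f by (fact assms)
  show ?thesis
    by (simp add: eval_mpoly_def eval_mon_def f.hom_sum f.hom_mult f.hom_prod f.hom_power)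
qed

end

lemma mp_eval_mult: "mp_eval (p * q) a = mp_eval p a * mp_eval q a"
  unfolding mp_eval_eq_eval_mpoly by (rule comm_ring_hom.eval_mpoly_mult[OF comm_ring_hom_id])

lemma mp_eval_one: "mp_eval 1 a = 1"
  unfolding mp_eval_eq_eval_mpoly by (rule comm_ring_hom.eval_mpoly_one[OF comm_ring_hom_id])

lemma keys_multE:
  assumes "m \<in> Poly_Mapping.keys (p * q)"
  obtains m1 m2 where "m1 \<in> Poly_Mapping.keys p" "m2 \<in> Poly_Mapping.keys q" "m = m1 + m2"
  using assms keys_mult[of p q] by blast

lemma mp_vars_below_add: "mp_vars_below n p \<Longrightarrow> mp_vars_below n q \<Longrightarrow> mp_vars_below n (p + q)"
  unfolding mp_vars_below_def using keys_add[of p q] by blast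

lemma mp_vars_below_diff: "mp_vars_below n p \<Longrightarrow> mp_vars_below n q \<Longrightarrow> mp_vars_below n (p - q)"
  unfolding mp_vars_below_def using keys_diff[of p q] by blast

lemma mp_vars_below_mult:
  assumes "mp_vars_below n p" "mp_vars_below n q"
  shows "mp_vars_below n (p * q)"
proof (unfold mp_vars_below_def, intro ballI)
  fix m assume "m \<in> Poly_Mapping.keys (p * q)"
  then obtain m1 m2 where "m1 \<in> Poly_Mapping.keys p" "m2 \<in> Poly_Mapping.keys q" "m = m1 + m2"
    by (rule keys_multE)
  then show "Poly_Mapping.keys m \<subseteq> {..<n}"
    using assms keys_add[of m1 m2] unfolding mp_vars_below_def by blast
qed

lemma mp_vars_below_mvar: "i < n \<Longrightarrow> mp_vars_below n (mvar i)"
  by (simp add: mp_vars_below_def mvar_def)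

lemma mp_vars_below_numeral: "mp_vars_below n (numeral k)"
  by (simp del: single_numeral add: single_numeral[symmetric] mp_vars_below_def)

definition homogeneous :: "nat \<Rightarrow> ((nat \<Rightarrow>\<^sub>0 nat) \<Rightarrow>\<^sub>0 'a::zero) \<Rightarrow> bool" where
  "homogeneous d p \<longleftrightarrow> (\<forall>m\<in>Poly_Mapping.keys p. mon_degree m = d)"

lemma mon_degree_add: "mon_degree (m + n) = mon_degree m + mon_degree n"
proof -
  let ?S = "Poly_Mapping.keys m \<union> Poly_Mapping.keys n"
  have "mon_degree k = (\<Sum>i\<in>?S. Poly_Mapping.lookup k i)" if "Poly_Mapping.keys k \<subseteq> ?S" for k
    unfolding mon_degree_def by (rule sum.mono_neutral_left) (use that in \<open>auto simp: in_keys_iff\<close>)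
  then show ?thesis
    by (simp add: keys_add lookup_add sum.distrib)
qed

lemma homogeneous_add: "homogeneous d p \<Longrightarrow> homogeneous d q \<Longrightarrow> homogeneous d (p + q)"
  unfolding homogeneous_def using keys_add[of p q] by blast

lemma homogeneous_diff: "homogeneous d p \<Longrightarrow> homogeneous d q \<Longrightarrow> homogeneous d (p - q)"
  unfolding homogeneous_def using keys_diff[of p q] by blast

lemma homogeneous_mult: "homogeneous d p \<Longrightarrow> homogeneous e q \<Longrightarrow> homogeneous (d + e) (p * q)"
  unfolding homogeneous_def by (auto elim!: keys_multE simp: mon_degree_add)

lemma homogeneous_mvar: "homogeneous 1 (mvar i)"
  by (simp add: homogeneous_def mvar_def mon_degree_def)

lemma homogeneous_numeral: "homogeneous 0 (numeral k)"
  by (simp del: single_numeral add: single_numeral[symmetric] homogeneous_def mon_degree_def)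

lemma homogeneous_cubic: "homogeneous 3 (mvar i * mvar j * mvar k)"
proof -
  have "homogeneous (1 + 1 + 1) (mvar i * mvar j * mvar k)"
    by (intro homogeneous_mult homogeneous_mvar)
  then show ?thesis by (simp add: numeral_3_eq_3)
qed

lemma homogeneous_0_imp_unit:
  fixes G :: "(nat \<Rightarrow>\<^sub>0 nat) \<Rightarrow>\<^sub>0 'a::field"
  assumes "homogeneous 0 G" "G \<noteq> 0"
  shows "G dvd 1"
proof -
  have "m = 0" if "m \<in> Poly_Mapping.keys G" for m
  proof -
    have "\<forall>i\<in>Poly_Mapping.keys m. Poly_Mapping.lookup m i = 0"
      using assms(1) that by (simp add: homogeneous_def mon_degree_def)
    then show ?thesis
      by (auto simp: in_keys_iff intro: poly_mapping_eqI)
  qed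
  moreover have "Poly_Mapping.keys G \<noteq> {}"
    using assms(2) by simp
  ultimately have "Poly_Mapping.keys G = {0}"
    by blast
  then obtain c where "G = Poly_Mapping.single 0 c" "c \<noteq> 0"
    using poly_mapping_sum_single[of G] by (auto simp: in_keys_iff)
  then have "G * Poly_Mapping.single 0 (inverse c) = 1"
    by (simp add: mult_single)
  then show ?thesis
    by (metis dvdI)
qed

lemma prod_monom: "(\<Prod>i\<in>A. monom (f i) (g i)) = monom (\<Prod>i\<in>A. f i) (\<Sum>i\<in>A. g i)"
  by (induction A rule: infinite_finite_induct) (simp_all add: mult_monom one_pCons monom_0)

lemma prod_single_1:
  "(\<Prod>i\<in>A. Poly_Mapping.single (f i) (1::'a::comm_semiring_1)) = Poly_Mapping.single (\<Sum>i\<in>A. f i) 1"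
  by (induction A rule: infinite_finite_induct) (simp_all add: mult_single)

lemma mvar_power: "mvar i ^ k = Poly_Mapping.single (Poly_Mapping.single i k) (1::'a::comm_ring_1)"
  by (induction k) (simp_all add: mvar_def mult_single single_add[symmetric])

text \<open>\<open>grade p\<close> is \<open>\<Sum>_k p_k T^k\<close>, where \<open>p_k\<close> is the homogeneous component of \<open>p\<close> of degree \<open>k\<close>.\<close>

definition grade :: "((nat \<Rightarrow>\<^sub>0 nat) \<Rightarrow>\<^sub>0 'a::comm_ring_1) \<Rightarrow> ((nat \<Rightarrow>\<^sub>0 nat) \<Rightarrow>\<^sub>0 'a) poly" where
  "grade p = eval_mpoly (\<lambda>c. [:Poly_Mapping.single 0 c:]) (\<lambda>i. monom (mvar i) 1) p"

lemma comm_ring_hom_const_single: "comm_ring_hom (\<lambda>c. [:Poly_Mapping.single 0 c:])"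
  by unfold_locales (simp_all add: single_add mult_single one_pCons mult.commute)

lemma grade_mult: "grade (p * q) = grade p * grade q"
  unfolding grade_def by (rule comm_ring_hom.eval_mpoly_mult[OF comm_ring_hom_const_single])

lemma eval_mon_grade:
  "eval_mon (\<lambda>i. monom (mvar i) 1) m = monom (Poly_Mapping.single m (1::'a::comm_ring_1)) (mon_degree m)"
proof -
  have "eval_mon (\<lambda>i. monom (mvar i) 1) m =
      monom (\<Prod>i\<in>Poly_Mapping.keys m. Poly_Mapping.single (Poly_Mapping.single i (Poly_Mapping.lookup m i)) (1::'a))
        (mon_degree m)"
    by (simp add: eval_mon_def monom_power mvar_power prod_monom mon_degree_def)
  also have "(\<Prod>i\<in>Poly_Mapping.keys m. Poly_Mapping.single (Poly_Mapping.single i (Poly_Mapping.lookup m i)) (1::'a))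
      = Poly_Mapping.single m 1"
    by (simp add: prod_single_1 poly_mapping_sum_single[of m, symmetric])
  finally show ?thesis .
qed

lemma lookup_coeff_grade:
  "Poly_Mapping.lookup (coeff (grade p) k) m = (if mon_degree m = k then Poly_Mapping.lookup p m else 0)"
proof -
  have coeff: "coeff (grade p) k =
      (\<Sum>m'\<in>Poly_Mapping.keys p. if mon_degree m' = k then Poly_Mapping.single m' (Poly_Mapping.lookup p m') else 0)"
    unfolding grade_def eval_mpoly_def eval_mon_grade by (simp add: coeff_sum smult_monom mult_single)
  have "Poly_Mapping.lookup (coeff (grade p) k) m =
      (\<Sum>m'\<in>Poly_Mapping.keys p. if m' = m then (if mon_degree m = k then Poly_Mapping.lookup p m else 0) else 0)"
    unfolding coeff lookup_sum by (intro sum.cong) (auto simp: lookup_single)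
  then show ?thesis
    by (simp add: in_keys_iff)
qed

lemma grade_homogeneous: "homogeneous d p \<Longrightarrow> grade p = monom p d"
  by (intro poly_eqI poly_mapping_eqI)
    (auto simp: lookup_coeff_grade coeff_monom homogeneous_def in_keys_iff)

lemma homogeneous_if_grade_eq_monom:
  assumes "grade p = monom c d"
  shows "homogeneous d p"
  unfolding homogeneous_def
proof
  fix m assume "m \<in> Poly_Mapping.keys p"
  then have "Poly_Mapping.lookup (coeff (grade p) (mon_degree m)) m \<noteq> 0"
    by (simp add: lookup_coeff_grade in_keys_iff)
  then show "mon_degree m = d"
    using assms by (auto simp: coeff_monom split: if_splits)
qed

lemma monom_factor:
  fixes p q :: "'a::idom poly"
  assumes pq: "p * q = monom c n" and "c \<noteq> 0"
  shows "p = monom (lead_coeff p) (degree p)"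
proof -
  have "p \<noteq> 0" "q \<noteq> 0" "p * q \<noteq> 0"
    using pq \<open>c \<noteq> 0\<close> by auto
  have "monom c n = monom 1 n * monom c 0"
    by (simp add: mult_monom)
  then have "monom 1 n dvd p * q"
    using pq by simp
  then have "n \<le> order 0 (p * q)"
    using monom_1_dvd_iff[OF \<open>p * q \<noteq> 0\<close>] by simp
  moreover have "degree (p * q) = n"
    using pq \<open>c \<noteq> 0\<close> by (simp add: degree_monom_eq)
  ultimately have "order 0 p + order 0 q \<ge> degree p + degree q"
    using order_mult[OF \<open>p * q \<noteq> 0\<close>] degree_mult_eq[OF \<open>p \<noteq> 0\<close> \<open>q \<noteq> 0\<close>] by simp
  moreover have "order 0 p \<le> degree p" "order 0 q \<le> degree q"
    using \<open>p \<noteq> 0\<close> \<open>q \<noteq> 0\<close> by (simp_all add: order_degree)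
  ultimately have "degree p \<le> order 0 p"
    by linarith
  then have low: "coeff p k = 0" if "k < degree p" for k
    using that monom_1_dvd_iff[OF \<open>p \<noteq> 0\<close>] monom_1_dvd_iff' by blast
  show ?thesis
  proof (rule poly_eqI)
    fix k
    show "coeff p k = coeff (monom (lead_coeff p) (degree p)) k"
      using low[of k] coeff_eq_0[of p k] by (cases k "degree p" rule: linorder_cases) auto
  qed
qed

lemma homogeneous_factor:
  fixes G H :: "(nat \<Rightarrow>\<^sub>0 nat) \<Rightarrow>\<^sub>0 'a::idom"
  assumes "homogeneous n (G * H)" "G * H \<noteq> 0"
  shows "homogeneous (degree (grade G)) G" "degree (grade G) + degree (grade H) = n"
proof -
  have GH: "grade G * grade H = monom (G * H) n"
    using grade_homogeneous[OF assms(1)] by (simp add: grade_mult)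
  then have "grade G = monom (lead_coeff (grade G)) (degree (grade G))"
    using assms(2) by (rule monom_factor)
  then show "homogeneous (degree (grade G)) G"
    by (rule homogeneous_if_grade_eq_monom)
  have "grade G \<noteq> 0" "grade H \<noteq> 0"
    using GH assms(2) by auto
  then show "degree (grade G) + degree (grade H) = n"
    using GH assms(2) by (simp add: degree_mult_eq[symmetric] degree_monom_eq)
qed

lemma coeff_mult_degree_bounds:
  fixes p q :: "'a::comm_ring_1 poly"
  assumes "degree p \<le> a" "degree q \<le> b"
  shows "coeff (p * q) (a + b) = coeff p a * coeff q b"
proof (cases "degree p = a \<and> degree q = b")
  case True
  then show ?thesis
    using coeff_mult_degree_sum[of p q] by simp
next
  case False
  then have "degree (p * q) < a + b"
    using assms degree_mult_le[of p q] by linarith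
  moreover have "coeff p a = 0 \<or> coeff q b = 0"
    using False assms by (auto intro: coeff_eq_0)
  ultimately show ?thesis
    by (auto simp: coeff_eq_0)
qed

lemma coeff_power_affine:
  fixes w :: "'a::comm_ring_1 poly"
  assumes "degree w \<le> 1"
  shows "degree (w ^ n) \<le> n \<and> coeff (w ^ n) n = coeff w 1 ^ n"
proof (induction n)
  case (Suc n)
  then have "coeff (w * w ^ n) (1 + n) = coeff w 1 * coeff (w ^ n) n"
    using assms by (intro coeff_mult_degree_bounds) simp_all
  moreover have "degree (w * w ^ n) \<le> 1 + n"
    using Suc assms degree_mult_le[of w "w ^ n"] by simp
  ultimately show ?case
    using Suc by simp
qed simp

lemma coeff_prod_power_affine:
  fixes w :: "'v \<Rightarrow> 'a::comm_ring_1 poly"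
  assumes "finite K" "\<And>i. degree (w i) \<le> 1"
  shows "degree (\<Prod>i\<in>K. w i ^ e i) \<le> (\<Sum>i\<in>K. e i)
    \<and> coeff (\<Prod>i\<in>K. w i ^ e i) (\<Sum>i\<in>K. e i) = (\<Prod>i\<in>K. coeff (w i) 1 ^ e i)"
  using assms(1)
proof (induction K rule: finite_induct)
  case (insert x F)
  have x: "degree (w x ^ e x) \<le> e x" "coeff (w x ^ e x) (e x) = coeff (w x) 1 ^ e x"
    using coeff_power_affine[OF assms(2)] by blast+
  have "coeff (w x ^ e x * (\<Prod>i\<in>F. w i ^ e i)) (e x + (\<Sum>i\<in>F. e i))
      = coeff (w x) 1 ^ e x * (\<Prod>i\<in>F. coeff (w i) 1 ^ e i)"
    using x insert.IH by (simp add: coeff_mult_degree_bounds)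
  moreover have "degree (w x ^ e x * (\<Prod>i\<in>F. w i ^ e i)) \<le> e x + (\<Sum>i\<in>F. e i)"
    using x insert.IH degree_mult_le[of "w x ^ e x" "\<Prod>i\<in>F. w i ^ e i"] by linarith
  ultimately show ?case
    using insert.hyps by simp
qed simp

lemma coeff_eval_mpoly_affine:
  fixes G :: "(nat \<Rightarrow>\<^sub>0 nat) \<Rightarrow>\<^sub>0 'a::comm_ring_1"
  assumes "homogeneous d G" "\<And>i. degree (w i) \<le> 1"
  shows "coeff (eval_mpoly (\<lambda>c. [:c:]) w G) d = eval_mpoly id (\<lambda>i. coeff (w i) 1) G"
proof -
  have "coeff (eval_mon w m) d = eval_mon (\<lambda>i. coeff (w i) 1) m" if "m \<in> Poly_Mapping.keys G" for m
  proof -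
    have "d = (\<Sum>i\<in>Poly_Mapping.keys m. Poly_Mapping.lookup m i)"
      using assms(1) that by (simp add: homogeneous_def mon_degree_def)
    then show ?thesis
      unfolding eval_mon_def
      using coeff_prod_power_affine[of "Poly_Mapping.keys m" w "Poly_Mapping.lookup m"] assms(2) by simp
  qed
  then show ?thesis
    by (simp add: eval_mpoly_def coeff_sum)
qed

section \<open>Linear algebra in \<open>\<complex>^2\<close>\<close>

text \<open>The simplifier must not rewrite the index 1
  to \<open>Suc 0\<close>.\<close>

declare One_nat_def [simp del]

definition vec2 :: "complex \<Rightarrow> complex \<Rightarrow> nat \<Rightarrow> complex" where
  "vec2 p q = (\<lambda>j. if j = 0 then p else q)"

lemma vec2_simps [simp]: "vec2 p q 0 = p" "vec2 p q 1 = q"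
  by (simp_all add: vec2_def)

definition dot2 :: "(nat \<Rightarrow> complex) \<Rightarrow> (nat \<Rightarrow> complex) \<Rightarrow> complex" where
  "dot2 p q = p 0 * q 0 + p 1 * q 1"

definition det2 :: "(nat \<Rightarrow> complex) \<Rightarrow> (nat \<Rightarrow> complex) \<Rightarrow> complex" where
  "det2 z w = z 0 * w 1 - z 1 * w 0"

definition perp2 :: "(nat \<Rightarrow> complex) \<Rightarrow> nat \<Rightarrow> complex" where
  "perp2 p = vec2 (p 1) (- p 0)"

definition multiple2 :: "(nat \<Rightarrow> complex) \<Rightarrow> (nat \<Rightarrow> complex) \<Rightarrow> bool" where
  "multiple2 u x \<longleftrightarrow> (\<exists>s. \<forall>j<2. u j = s * x j)"

lemma all_less_2: "(\<forall>j<2::nat. P j) \<longleftrightarrow> P 0 \<and> P 1"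
  by (auto simp: less_2_cases_iff One_nat_def)

lemma multiple2_iff: "multiple2 u x \<longleftrightarrow> (\<exists>s. u 0 = s * x 0 \<and> u 1 = s * x 1)"
  by (simp add: multiple2_def all_less_2)

lemma dot2_commute: "dot2 p q = dot2 q p"
  by (simp add: dot2_def mult.commute)

lemma dot2_perp2_antisym: "dot2 (perp2 p) q + dot2 (perp2 q) p = 0"
  by (simp add: dot2_def perp2_def algebra_simps)

lemma dot2_perp2_self: "dot2 (perp2 p) p = 0" "dot2 p (perp2 p) = 0"
  by (simp_all add: dot2_def perp2_def algebra_simps)

lemma nonzero2_perp2: "nonzero2 (perp2 p) \<longleftrightarrow> nonzero2 p"
  by (auto simp: nonzero2_def perp2_def)

lemma dot2_eq_dot2E:
  assumes "nonzero2 p" "dot2 p v = dot2 p v'"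
  obtains k where "v 0 = v' 0 + k * p 1" "v 1 = v' 1 - k * p 0"
proof (cases "p 0 = 0")
  case True
  with assms have "p 1 \<noteq> 0" "v 1 = v' 1"
    by (auto simp: nonzero2_def dot2_def algebra_simps)
  with True show ?thesis
    using that[of "(v 0 - v' 0) / p 1"] by simp
next
  case False
  with assms(2) have "v 0 = v' 0 + (- (v 1 - v' 1) / p 0) * p 1"
    by (simp add: dot2_def field_simps)
  with False show ?thesis
    using that[of "- (v 1 - v' 1) / p 0"] by simp
qed

lemma dot2_eq_0E:
  assumes "nonzero2 p" "dot2 p v = 0"
  obtains k where "v 0 = k * p 1" "v 1 = - k * p 0"
  using dot2_eq_dot2E[of p v "vec2 0 0"] assms by (auto simp: dot2_def)

lemma multiple2_if_dot2_eq_0: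
  assumes "nonzero2 p" "nonzero2 y" "dot2 p y = 0" "dot2 p v = 0"
  shows "multiple2 v y"
proof -
  obtain l where y: "y 0 = l * p 1" "y 1 = - l * p 0"
    using dot2_eq_0E assms(1,3) by metis
  obtain k where v: "v 0 = k * p 1" "v 1 = - k * p 0"
    using dot2_eq_0E assms(1,4) by metis
  have "l \<noteq> 0"
    using assms(2) y by (auto simp: nonzero2_def)
  then show ?thesis
    unfolding multiple2_iff using y v by (intro exI[of _ "k / l"]) simp
qed

lemma multiple2_iff_det2:
  assumes "nonzero2 z"
  shows "multiple2 w z \<longleftrightarrow> det2 z w = 0"
proof
  assume "det2 z w = 0"
  then have dz: "dot2 (vec2 (z 1) (- z 0)) w = 0"
    by (simp add: det2_def dot2_def algebra_simps)
  have nz: "nonzero2 (vec2 (z 1) (- z 0))"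
    using assms by (auto simp: nonzero2_def)
  obtain k where "w 0 = k * vec2 (z 1) (- z 0) 1" "w 1 = - k * vec2 (z 1) (- z 0) 0"
    by (rule dot2_eq_0E[OF nz dz])
  then have "w 0 = (- k) * z 0 \<and> w 1 = (- k) * z 1"
    by simp
  then show "multiple2 w z"
    unfolding multiple2_iff by blast
qed (auto simp: multiple2_iff det2_def)

lemma det2_cramer:
  assumes "det2 z w \<noteq> 0" "dot2 z g = 0" "dot2 w g = 0"
  shows "\<not> nonzero2 g"
proof -
  have "det2 z w * g 0 = w 1 * dot2 z g - z 1 * dot2 w g"
    and "det2 z w * g 1 = z 0 * dot2 w g - w 0 * dot2 z g"
    by (simp_all add: det2_def dot2_def algebra_simps)
  with assms show ?thesis
    by (simp add: nonzero2_def)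
qed

lemma exists_det2_nonzero:
  assumes "nonzero2 z"
  obtains w where "det2 z w \<noteq> 0"
proof (cases "z 0 = 0")
  case True
  with assms show ?thesis
    using that[of "vec2 (-1) 0"] by (simp add: det2_def nonzero2_def)
next
  case False
  then show ?thesis
    using that[of "vec2 0 1"] by (simp add: det2_def)
qed

lemma exists_dot2_eq:
  assumes "nonzero2 p"
  obtains v where "dot2 p v = c"
proof (cases "p 0 = 0")
  case True
  with assms show ?thesis
    using that[of "vec2 0 (c / p 1)"] by (simp add: dot2_def nonzero2_def)
next
  case False
  then show ?thesis
    using that[of "vec2 (c / p 0) 0"] by (simp add: dot2_def)
qed

lemma sum_less_2: "(\<Sum>j<2::nat. f j) = f 0 + f 1"
  by (simp add: numeral_2_eq_2 One_nat_def)

lemma bil_expand: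
  "bil a i p q = a (4 * i) * p 0 * q 0 + a (4 * i + 1) * p 0 * q 1
     + a (4 * i + 2) * p 1 * q 0 + a (4 * i + 3) * p 1 * q 1"
  unfolding bil_def sum_less_2 by (simp add: add.assoc numeral_3_eq_3 One_nat_def)

lemma bil_numeral_expand:
  "bil a 0 p q = a 0 * p 0 * q 0 + a 1 * p 0 * q 1 + a 2 * p 1 * q 0 + a 3 * p 1 * q 1"
  "bil a 1 p q = a 4 * p 0 * q 0 + a 5 * p 0 * q 1 + a 6 * p 1 * q 0 + a 7 * p 1 * q 1"
  "bil a 2 p q = a 8 * p 0 * q 0 + a 9 * p 0 * q 1 + a 10 * p 1 * q 0 + a 11 * p 1 * q 1"
  unfolding bil_def sum_less_2
  by (simp_all only: mult_0_right mult_1_right add_0_right add_0_left arith_simps)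
    (simp_all add: add.assoc)

definition bil_mat :: "(nat \<Rightarrow> complex) \<Rightarrow> nat \<Rightarrow> (nat \<Rightarrow> complex) \<Rightarrow> nat \<Rightarrow> complex" where
  "bil_mat a i q = vec2 (bil a i (vec2 1 0) q) (bil a i (vec2 0 1) q)"

definition bil_tmat :: "(nat \<Rightarrow> complex) \<Rightarrow> nat \<Rightarrow> (nat \<Rightarrow> complex) \<Rightarrow> nat \<Rightarrow> complex" where
  "bil_tmat a i p = vec2 (bil a i p (vec2 1 0)) (bil a i p (vec2 0 1))"

lemma bil_eq_dot2: "bil a i p q = dot2 p (bil_mat a i q)" "bil a i p q = dot2 (bil_tmat a i p) q"
  by (simp_all add: bil_expand dot2_def bil_mat_def bil_tmat_def algebra_simps)

lemma bil_vec2_0: "bil a i (vec2 0 0) q = 0" "bil a i p (vec2 0 0) = 0"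
  by (simp_all add: bil_expand)

lemma bil_multiple_left:
  assumes "u 0 = s * x 0" "u 1 = s * x 1"
  shows "bil a i u y = s * bil a i x y"
  using assms by (simp add: bil_expand algebra_simps)

lemma bil_multiple_right:
  assumes "w 0 = r * z 0" "w 1 = r * z 1"
  shows "bil a i x w = r * bil a i x z"
  using assms by (simp add: bil_expand algebra_simps)

lemma bil_eq_0E:
  assumes "nonzero2 (bil_mat a i z)" "bil a i y z = 0"
  obtains l where "y 0 = l * bil_mat a i z 1" "y 1 = - l * bil_mat a i z 0"
  using dot2_eq_0E[OF assms(1), of y] assms(2) by (metis bil_eq_dot2(1) dot2_commute)

lemma bil_tangent_eq_0E:
  assumes "nonzero2 (bil_mat a i z)" and y: "y 0 = l * bil_mat a i z 1" "y 1 = - l * bil_mat a i z 0"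
    and "bil a i v z + bil a i y w = 0"
  obtains k where "v 0 = l * bil_mat a i w 1 + k * bil_mat a i z 1"
    "v 1 = - l * bil_mat a i w 0 - k * bil_mat a i z 0"
proof -
  have "dot2 (bil_mat a i z) v = dot2 (bil_mat a i z) (vec2 (l * bil_mat a i w 1) (- l * bil_mat a i w 0))"
    using assms(4) by (simp add: bil_eq_dot2(1) dot2_def y algebra_simps)
  then show ?thesis
    using dot2_eq_dot2E assms(1) that by (metis vec2_simps)
qed

lemma singular_zero_iff:
  "singular_zero a x y z \<longleftrightarrow> in_zero_set a x y z \<and>
     (\<exists>u v w. bil a 0 v z + bil a 0 y w = 0 \<and> bil a 1 u z + bil a 1 x w = 0 \<and>
        bil a 2 u y + bil a 2 x v = 0 \<and> \<not> (multiple2 u x \<and> multiple2 v y \<and> multiple2 w z))"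
  unfolding singular_zero_def multiple2_iff all_less_2 by blast

lemma singular_zeroI:
  assumes "in_zero_set a x y z" "bil a 0 v z + bil a 0 y w = 0" "bil a 1 u z + bil a 1 x w = 0"
    "bil a 2 u y + bil a 2 x v = 0" "\<not> multiple2 u x \<or> \<not> multiple2 v y \<or> \<not> multiple2 w z"
  shows "singular_zero a x y z"
  using assms unfolding singular_zero_iff by blast

text \<open>Exchanging x and y swaps f1 with f2 and transposes f3.\<close>

definition swap_xy :: "(nat \<Rightarrow> 'a) \<Rightarrow> nat \<Rightarrow> 'a" where
  "swap_xy a i = a (if i < 12 then [4, 5, 6, 7, 0, 1, 2, 3, 8, 10, 9, 11] ! i else i)"

lemma swap_xy_simps [simp]:
  "swap_xy a 0 = a 4" "swap_xy a 1 = a 5" "swap_xy a 2 = a 6" "swap_xy a 3 = a 7"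
  "swap_xy a 4 = a 0" "swap_xy a 5 = a 1" "swap_xy a 6 = a 2" "swap_xy a 7 = a 3"
  "swap_xy a 8 = a 8" "swap_xy a 9 = a 10" "swap_xy a 10 = a 9" "swap_xy a 11 = a 11"
  by (simp_all add: swap_xy_def)

lemma bil_swap_xy:
  "bil (swap_xy a) 0 p q = bil a 1 p q" "bil (swap_xy a) 1 p q = bil a 0 p q"
  "bil (swap_xy a) 2 p q = bil a 2 q p"
  by (simp_all add: bil_numeral_expand algebra_simps)

lemma bil_mat_swap_xy: "bil_mat (swap_xy a) 0 = bil_mat a 1" "bil_mat (swap_xy a) 1 = bil_mat a 0"
  by (simp_all add: bil_mat_def bil_swap_xy fun_eq_iff)

lemma singular_zero_swap_xy: "singular_zero (swap_xy a) y x z \<longleftrightarrow> singular_zero a x y z"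
  unfolding singular_zero_iff in_zero_set_def bil_swap_xy by (auto simp: add.commute)

section \<open>The binary quadratic form\<close>

text \<open>The coefficients of \<open>Q(z) = bil a 2 (perp2 (bil_mat a 1 z)) (perp2 (bil_mat a 0 z))\<close>
  as a quadratic form in \<open>z\<close>; \<open>polar\<close> is its polarization and \<open>quad_grad\<close> its gradient.\<close>

definition quad_coeff0 :: "(nat \<Rightarrow> 'a::comm_ring_1) \<Rightarrow> 'a" where
  "quad_coeff0 a = a 2 * a 6 * a 8 - a 2 * a 4 * a 10 - a 0 * a 6 * a 9 + a 0 * a 4 * a 11"

definition quad_coeff1 :: "(nat \<Rightarrow> 'a::comm_ring_1) \<Rightarrow> 'a" where
  "quad_coeff1 a = a 3 * a 6 * a 8 - a 3 * a 4 * a 10 + a 2 * a 7 * a 8 - a 2 * a 5 * a 10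
     - a 1 * a 6 * a 9 + a 1 * a 4 * a 11 - a 0 * a 7 * a 9 + a 0 * a 5 * a 11"

definition quad_coeff2 :: "(nat \<Rightarrow> 'a::comm_ring_1) \<Rightarrow> 'a" where
  "quad_coeff2 a = a 3 * a 7 * a 8 - a 3 * a 5 * a 10 - a 1 * a 7 * a 9 + a 1 * a 5 * a 11"

definition quad_disc :: "(nat \<Rightarrow> 'a::comm_ring_1) \<Rightarrow> 'a" where
  "quad_disc a = quad_coeff1 a * quad_coeff1 a - 4 * quad_coeff0 a * quad_coeff2 a"

definition quad_grad :: "(nat \<Rightarrow> complex) \<Rightarrow> (nat \<Rightarrow> complex) \<Rightarrow> nat \<Rightarrow> complex" where
  "quad_grad a z =
     vec2 (2 * quad_coeff0 a * z 0 + quad_coeff1 a * z 1) (quad_coeff1 a * z 0 + 2 * quad_coeff2 a * z 1)"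

definition polar :: "(nat \<Rightarrow> complex) \<Rightarrow> (nat \<Rightarrow> complex) \<Rightarrow> (nat \<Rightarrow> complex) \<Rightarrow> complex" where
  "polar a z w = bil a 2 (perp2 (bil_mat a 1 w)) (perp2 (bil_mat a 0 z))
     + bil a 2 (perp2 (bil_mat a 1 z)) (perp2 (bil_mat a 0 w))"

lemma polar_eq_dot2_quad_grad: "polar a z w = dot2 w (quad_grad a z)"
  by (simp add: polar_def bil_numeral_expand perp2_def bil_mat_def dot2_def quad_grad_def
      quad_coeff0_def quad_coeff1_def quad_coeff2_def algebra_simps)

lemma quad_grad_swap_xy: "quad_grad (swap_xy a) = quad_grad a"
  by (simp add: quad_grad_def quad_coeff0_def quad_coeff1_def quad_coeff2_def fun_eq_iff algebra_simps)

lemma binary_quadratic_singular_iff: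
  fixes c0 c1 c2 :: "'a::{idom, ring_char_0}"
  shows "c1 * c1 - 4 * c0 * c2 = 0 \<longleftrightarrow>
    (\<exists>z0 z1. (z0 \<noteq> 0 \<or> z1 \<noteq> 0) \<and> 2 * c0 * z0 + c1 * z1 = 0 \<and> c1 * z0 + 2 * c2 * z1 = 0)"
proof
  assume disc: "c1 * c1 - 4 * c0 * c2 = 0"
  show "\<exists>z0 z1. (z0 \<noteq> 0 \<or> z1 \<noteq> 0) \<and> 2 * c0 * z0 + c1 * z1 = 0 \<and> c1 * z0 + 2 * c2 * z1 = 0"
  proof (cases "c0 = 0 \<and> c1 = 0")
    case True
    then show ?thesis
      by (intro exI[of _ 1] exI[of _ 0]) simp
  next
    case False
    then have "c1 \<noteq> 0 \<or> - 2 * c0 \<noteq> 0"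
      by auto
    moreover have "c1 * c1 + 2 * c2 * (- 2 * c0) = 0"
      using disc by (simp add: algebra_simps)
    ultimately show ?thesis
      by (intro exI[of _ c1] exI[of _ "- 2 * c0"]) (simp add: algebra_simps)
  qed
next
  assume "\<exists>z0 z1. (z0 \<noteq> 0 \<or> z1 \<noteq> 0) \<and> 2 * c0 * z0 + c1 * z1 = 0 \<and> c1 * z0 + 2 * c2 * z1 = 0"
  then obtain z0 z1 where "z0 \<noteq> 0 \<or> z1 \<noteq> 0" and g: "2 * c0 * z0 + c1 * z1 = 0" "c1 * z0 + 2 * c2 * z1 = 0"
    by blast
  moreover have
    "(c1 * c1 - 4 * c0 * c2) * z0 = c1 * (c1 * z0 + 2 * c2 * z1) - 2 * c2 * (2 * c0 * z0 + c1 * z1)"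
    "(c1 * c1 - 4 * c0 * c2) * z1 = c1 * (2 * c0 * z0 + c1 * z1) - 2 * c0 * (c1 * z0 + 2 * c2 * z1)"
    by (simp_all add: algebra_simps)
  ultimately show "c1 * c1 - 4 * c0 * c2 = 0"
    by auto
qed

lemma quad_disc_eq_0_iff: "quad_disc a = 0 \<longleftrightarrow> (\<exists>z. nonzero2 z \<and> \<not> nonzero2 (quad_grad a z))"
  unfolding quad_disc_def binary_quadratic_singular_iff
proof
  assume "\<exists>z0 z1. (z0 \<noteq> 0 \<or> z1 \<noteq> 0) \<and> 2 * quad_coeff0 a * z0 + quad_coeff1 a * z1 = 0
            \<and> quad_coeff1 a * z0 + 2 * quad_coeff2 a * z1 = 0"
  then obtain z0 z1 where "z0 \<noteq> 0 \<or> z1 \<noteq> 0" "2 * quad_coeff0 a * z0 + quad_coeff1 a * z1 = 0"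
      "quad_coeff1 a * z0 + 2 * quad_coeff2 a * z1 = 0"
    by blast
  then show "\<exists>z. nonzero2 z \<and> \<not> nonzero2 (quad_grad a z)"
    by (intro exI[of _ "vec2 z0 z1"]) (simp add: nonzero2_def quad_grad_def)
qed (auto simp: nonzero2_def quad_grad_def)

lemma quad_grad_eq_0_if_polar:
  assumes "\<And>w. polar a z w = 0"
  shows "\<not> nonzero2 (quad_grad a z)"
  using det2_cramer[of "vec2 1 0" "vec2 0 1"] assms by (simp add: polar_eq_dot2_quad_grad det2_def)

lemma quad_grad_eq_0_if_polar_tangent:
  assumes "nonzero2 z" "polar a z z = 0" "polar a z w = 0" "\<not> multiple2 w z"
  shows "\<not> nonzero2 (quad_grad a z)"
  using det2_cramer[of z w] multiple2_iff_det2[of z w] assms by (simp add: polar_eq_dot2_quad_grad)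

lemma polar_degenerate:
  assumes "\<not> nonzero2 (bil_mat a 0 z)"
  shows "polar a z w = bil a 2 (perp2 (bil_mat a 1 z)) (perp2 (bil_mat a 0 w))"
  using assms by (simp add: polar_def bil_numeral_expand perp2_def nonzero2_def)

lemma polar_degenerate_scaled:
  assumes P: "\<not> nonzero2 (bil_mat a 0 z)"
    and x: "x 0 = m * bil_mat a 1 z 1" "x 1 = - m * bil_mat a 1 z 0"
  shows "m * polar a z w = dot2 (bil_tmat a 2 x) (perp2 (bil_mat a 0 w))"
  by (simp add: polar_degenerate[OF P] bil_eq_dot2(2)[symmetric] bil_numeral_expand perp2_def x
      algebra_simps)

lemma polar_degenerate_scaled_bil:
  assumes P: "\<not> nonzero2 (bil_mat a 0 z)"
    and x: "x 0 = m * bil_mat a 1 z 1" "x 1 = - m * bil_mat a 1 z 0"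
    and y: "y 0 = n * bil_tmat a 2 x 1" "y 1 = - n * bil_tmat a 2 x 0"
  shows "m * n * polar a z w = - bil a 0 y w"
proof -
  have "m * n * polar a z w = n * dot2 (bil_tmat a 2 x) (perp2 (bil_mat a 0 w))"
    by (simp flip: polar_degenerate_scaled[OF P x])
  also have "\<dots> = - bil a 0 y w"
    by (simp add: bil_eq_dot2(1) dot2_def perp2_def y algebra_simps)
  finally show ?thesis .
qed

section \<open>Singular zeros\<close>

lemma tangent_along_z_is_euler:
  assumes zero: "in_zero_set a x y z"
    and E1: "bil a 0 v z + bil a 0 y w = 0" and E2: "bil a 1 u z + bil a 1 x w = 0"
    and E3: "bil a 2 u y + bil a 2 x v = 0" and "multiple2 w z"
    and R: "nonzero2 (bil_mat a 1 z)" and P_or_p: "nonzero2 (bil_mat a 0 z) \<or> nonzero2 (bil_tmat a 2 x)"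
  shows "multiple2 u x \<and> multiple2 v y"
proof -
  obtain r where "w 0 = r * z 0" "w 1 = r * z 1"
    using \<open>multiple2 w z\<close> unfolding multiple2_iff by blast
  then have "bil a 0 v z = 0" "bil a 1 u z = 0"
    using zero E1 E2 by (simp_all add: bil_multiple_right in_zero_set_def)
  then have "multiple2 u x"
    using zero R multiple2_if_dot2_eq_0 by (simp add: in_zero_set_def bil_eq_dot2(1) dot2_commute)
  moreover have "multiple2 v y"
  proof (cases "nonzero2 (bil_mat a 0 z)")
    case True
    then show ?thesis
      using zero \<open>bil a 0 v z = 0\<close> multiple2_if_dot2_eq_0
      by (simp add: in_zero_set_def bil_eq_dot2(1) dot2_commute)
  next
    case False
    obtain s where "u 0 = s * x 0" "u 1 = s * x 1"
      using \<open>multiple2 u x\<close> unfolding multiple2_iff by blast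
    then have "bil a 2 x v = 0"
      using zero E3 by (simp add: bil_multiple_left in_zero_set_def)
    then show ?thesis
      using zero False P_or_p multiple2_if_dot2_eq_0 by (simp add: in_zero_set_def bil_eq_dot2(2))
  qed
  ultimately show ?thesis ..
qed

lemma polar_generic_tangent:
  assumes zero: "in_zero_set a x y z"
    and P: "nonzero2 (bil_mat a 0 z)" and R: "nonzero2 (bil_mat a 1 z)"
    and E1: "bil a 0 v z + bil a 0 y w = 0" and E2: "bil a 1 u z + bil a 1 x w = 0"
    and E3: "bil a 2 u y + bil a 2 x v = 0"
  shows "polar a z z = 0" "polar a z w = 0"
proof -
  define Q where "Q = bil a 2 (perp2 (bil_mat a 1 z)) (perp2 (bil_mat a 0 z))"
  obtain l m where y: "y 0 = l * bil_mat a 0 z 1" "y 1 = - l * bil_mat a 0 z 0"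
    and x: "x 0 = m * bil_mat a 1 z 1" "x 1 = - m * bil_mat a 1 z 0"
    using bil_eq_0E[OF P] bil_eq_0E[OF R] zero unfolding in_zero_set_def by metis
  have "l \<noteq> 0" "m \<noteq> 0"
    using zero x y by (auto simp: in_zero_set_def nonzero2_def)
  have "bil a 2 x y = l * m * Q"
    by (simp add: Q_def bil_numeral_expand perp2_def x y algebra_simps)
  then have "Q = 0"
    using zero \<open>l \<noteq> 0\<close> \<open>m \<noteq> 0\<close> by (simp add: in_zero_set_def)
  then show "polar a z z = 0"
    by (simp add: polar_def Q_def)
  obtain k where v: "v 0 = l * bil_mat a 0 w 1 + k * bil_mat a 0 z 1"
    "v 1 = - l * bil_mat a 0 w 0 - k * bil_mat a 0 z 0"
    using bil_tangent_eq_0E[OF P y E1] by blast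
  obtain k' where u: "u 0 = m * bil_mat a 1 w 1 + k' * bil_mat a 1 z 1"
    "u 1 = - m * bil_mat a 1 w 0 - k' * bil_mat a 1 z 0"
    using bil_tangent_eq_0E[OF R x E2] by blast
  have "bil a 2 u y + bil a 2 x v = l * m * polar a z w + (k' * l + k * m) * Q"
    by (simp add: polar_def Q_def bil_numeral_expand perp2_def u v x y algebra_simps)
  then show "polar a z w = 0"
    using E3 \<open>Q = 0\<close> \<open>l \<noteq> 0\<close> \<open>m \<noteq> 0\<close> by simp
qed

lemma singular_zero_generic_imp_quad_grad:
  assumes "singular_zero a x y z" and P: "nonzero2 (bil_mat a 0 z)" and R: "nonzero2 (bil_mat a 1 z)"
  shows "\<not> nonzero2 (quad_grad a z)"
proof -
  obtain u v w where zero: "in_zero_set a x y z"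
    and E: "bil a 0 v z + bil a 0 y w = 0" "bil a 1 u z + bil a 1 x w = 0" "bil a 2 u y + bil a 2 x v = 0"
    and NE: "\<not> (multiple2 u x \<and> multiple2 v y \<and> multiple2 w z)"
    using assms(1) unfolding singular_zero_iff by blast
  have "\<not> multiple2 w z"
    using tangent_along_z_is_euler[OF zero E _ R] P NE by blast
  with zero polar_generic_tangent[OF zero P R E] show ?thesis
    by (intro quad_grad_eq_0_if_polar_tangent) (simp_all add: in_zero_set_def)
qed

lemma singular_zero_degenerate_imp_quad_grad:
  assumes "singular_zero a x y z" and P: "\<not> nonzero2 (bil_mat a 0 z)"
  shows "\<not> nonzero2 (quad_grad a z)"
proof -
  obtain u v w where zero: "in_zero_set a x y z"
    and E: "bil a 0 v z + bil a 0 y w = 0" "bil a 1 u z + bil a 1 x w = 0" "bil a 2 u y + bil a 2 x v = 0"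
    and NE: "\<not> (multiple2 u x \<and> multiple2 v y \<and> multiple2 w z)"
    using assms(1) unfolding singular_zero_iff by blast
  show ?thesis
  proof (cases "nonzero2 (bil_mat a 1 z)")
    case False
    then show ?thesis
      using quad_grad_eq_0_if_polar polar_degenerate[OF P] by (simp add: bil_numeral_expand perp2_def nonzero2_def)
  next
    case R: True
    obtain m where x: "x 0 = m * bil_mat a 1 z 1" "x 1 = - m * bil_mat a 1 z 0"
      using bil_eq_0E[OF R] zero unfolding in_zero_set_def by metis
    have "m \<noteq> 0"
      using zero x by (auto simp: in_zero_set_def nonzero2_def)
    define p where "p = bil_tmat a 2 x"
    show ?thesis
    proof (cases "nonzero2 p")
      case False
      then show ?thesis
        using quad_grad_eq_0_if_polar polar_degenerate_scaled[OF P x] \<open>m \<noteq> 0\<close>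
        by (simp add: p_def dot2_def nonzero2_def)
    next
      case True
      obtain n where y: "y 0 = n * p 1" "y 1 = - n * p 0"
        using dot2_eq_0E[OF True] zero by (metis in_zero_set_def p_def bil_eq_dot2(2))
      have "n \<noteq> 0"
        using zero y by (auto simp: in_zero_set_def nonzero2_def)
      have polar_y: "polar a z w' = 0" if "bil a 0 y w' = 0" for w'
        using that polar_degenerate_scaled_bil[OF P x y[unfolded p_def], of w'] \<open>m \<noteq> 0\<close> \<open>n \<noteq> 0\<close>
        by simp
      have "bil a 0 v z = 0"
        using P by (simp add: bil_eq_dot2(1) dot2_def nonzero2_def)
      then have "polar a z w = 0" "polar a z z = 0"
        using E(1) zero polar_y by (simp_all add: in_zero_set_def)
      moreover have "\<not> multiple2 w z"
        using tangent_along_z_is_euler[OF zero E _ R] True NE unfolding p_def by blast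
      ultimately show ?thesis
        using zero by (intro quad_grad_eq_0_if_polar_tangent) (simp_all add: in_zero_set_def)
    qed
  qed
qed

lemma singular_zero_imp_quad_grad:
  assumes "singular_zero a x y z"
  shows "nonzero2 z \<and> \<not> nonzero2 (quad_grad a z)"
proof -
  have "nonzero2 z"
    using assms unfolding singular_zero_def in_zero_set_def by blast
  moreover consider "nonzero2 (bil_mat a 0 z)" "nonzero2 (bil_mat a 1 z)"
    | "\<not> nonzero2 (bil_mat a 0 z)" | "\<not> nonzero2 (bil_mat (swap_xy a) 0 z)"
    by (auto simp: bil_mat_swap_xy)
  then have "\<not> nonzero2 (quad_grad a z)"
  proof cases
    case 1
    with assms show ?thesis
      by (rule singular_zero_generic_imp_quad_grad)
  next
    case 2
    with assms show ?thesis
      by (rule singular_zero_degenerate_imp_quad_grad)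
  next
    case 3
    have "singular_zero (swap_xy a) y x z"
      using assms by (simp add: singular_zero_swap_xy)
    from singular_zero_degenerate_imp_quad_grad[OF this 3] show ?thesis
      by (simp add: quad_grad_swap_xy)
  qed
  ultimately show ?thesis ..
qed

lemma quad_grad_generic_imp_singular_zero:
  assumes z: "nonzero2 z" and g: "\<not> nonzero2 (quad_grad a z)"
    and P: "nonzero2 (bil_mat a 0 z)" and R: "nonzero2 (bil_mat a 1 z)"
  shows "singular_zero a (perp2 (bil_mat a 1 z)) (perp2 (bil_mat a 0 z)) z"
proof -
  obtain w where "det2 z w \<noteq> 0"
    using exists_det2_nonzero z by blast
  then have "\<not> multiple2 w z"
    using multiple2_iff_det2 z by blast
  have polar: "polar a z w' = 0" for w'
    using g by (simp add: polar_eq_dot2_quad_grad dot2_def nonzero2_def)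
  show ?thesis
  proof (rule singular_zeroI[where u = "perp2 (bil_mat a 1 w)" and v = "perp2 (bil_mat a 0 w)" and w = w])
    show "in_zero_set a (perp2 (bil_mat a 1 z)) (perp2 (bil_mat a 0 z)) z"
      using z P R polar[of z]
      by (simp add: in_zero_set_def nonzero2_perp2 bil_eq_dot2(1) dot2_perp2_self polar_def)
    show "bil a 2 (perp2 (bil_mat a 1 w)) (perp2 (bil_mat a 0 z))
        + bil a 2 (perp2 (bil_mat a 1 z)) (perp2 (bil_mat a 0 w)) = 0"
      using polar[of w] by (simp add: polar_def)
  qed (use \<open>\<not> multiple2 w z\<close> in \<open>simp_all add: bil_eq_dot2(1) dot2_perp2_antisym\<close>)
qed

lemma singular_zero_degenerate_flat:
  assumes "nonzero2 x" "nonzero2 z" "\<not> nonzero2 (bil_mat a 0 z)" "bil a 1 x z = 0"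
    and "\<not> nonzero2 (bil_tmat a 2 x)"
  shows "singular_zero a x (vec2 1 0) z"
proof -
  have "bil a 0 y' z = 0" for y'
    using assms(3) by (simp add: bil_eq_dot2(1) dot2_def nonzero2_def)
  moreover have "bil a 2 x y' = 0" for y'
    using assms(5) by (simp add: bil_eq_dot2(2) dot2_def nonzero2_def)
  ultimately show ?thesis
    using assms
    by (intro singular_zeroI[where u = "vec2 0 0" and v = "vec2 0 1" and w = "vec2 0 0"])
      (auto simp: in_zero_set_def nonzero2_def multiple2_iff bil_vec2_0)
qed

lemma singular_zero_doubly_degenerate:
  assumes "nonzero2 x" "nonzero2 z" "\<not> nonzero2 (bil_mat a 0 z)" "\<not> nonzero2 (bil_mat a 1 z)"
    and p: "nonzero2 (bil_tmat a 2 x)"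
  shows "singular_zero a x (perp2 (bil_tmat a 2 x)) z"
proof -
  have f1: "bil a 0 y' z = 0" and f2: "bil a 1 x' z = 0" for x' y'
    using assms(3,4) by (simp_all add: bil_eq_dot2(1) dot2_def nonzero2_def)
  obtain u where "det2 x u \<noteq> 0"
    using exists_det2_nonzero assms(1) by blast
  then have "\<not> multiple2 u x"
    using multiple2_iff_det2 assms(1) by blast
  obtain v where "dot2 (bil_tmat a 2 x) v = - bil a 2 u (perp2 (bil_tmat a 2 x))"
    using exists_dot2_eq p by blast
  then have "bil a 2 x v = - bil a 2 u (perp2 (bil_tmat a 2 x))"
    by (simp add: bil_eq_dot2(2))
  moreover have "bil a 2 x (perp2 (bil_tmat a 2 x)) = 0"
    by (simp add: bil_eq_dot2(2) dot2_perp2_self)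
  ultimately show ?thesis
    using assms \<open>\<not> multiple2 u x\<close>
    by (intro singular_zeroI[where u = u and v = v and w = "vec2 0 0"])
      (simp_all add: in_zero_set_def f1 f2 nonzero2_perp2 bil_vec2_0)
qed

lemma singular_zero_degenerate_transversal:
  assumes z: "nonzero2 z" and g: "\<not> nonzero2 (quad_grad a z)"
    and P: "\<not> nonzero2 (bil_mat a 0 z)" and R: "nonzero2 (bil_mat a 1 z)"
    and p: "nonzero2 (bil_tmat a 2 (perp2 (bil_mat a 1 z)))"
  shows "singular_zero a (perp2 (bil_mat a 1 z)) (perp2 (bil_tmat a 2 (perp2 (bil_mat a 1 z)))) z"
    (is "singular_zero a ?x ?y z")
proof -
  obtain w where "det2 z w \<noteq> 0"
    using exists_det2_nonzero z by blast
  then have "\<not> multiple2 w z"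
    using multiple2_iff_det2 z by blast
  have "polar a z w = 0"
    using g by (simp add: polar_eq_dot2_quad_grad dot2_def nonzero2_def)
  then have "dot2 (bil_tmat a 2 ?x) (perp2 (bil_mat a 0 w)) = 0"
    by (simp add: polar_degenerate[OF P] bil_eq_dot2(2))
  then have "bil a 0 ?y w = 0"
    using dot2_perp2_antisym[of "bil_tmat a 2 ?x" "bil_mat a 0 w"] by (simp add: bil_eq_dot2(1) dot2_commute)
  moreover have "bil a 0 y' z = 0" for y'
    using P by (simp add: bil_eq_dot2(1) dot2_def nonzero2_def)
  moreover obtain v where "dot2 (bil_tmat a 2 ?x) v = - bil a 2 (perp2 (bil_mat a 1 w)) ?y"
    using exists_dot2_eq p by blast
  then have "bil a 2 ?x v = - bil a 2 (perp2 (bil_mat a 1 w)) ?y"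
    by (simp add: bil_eq_dot2(2))
  moreover have "bil a 2 ?x ?y = 0"
    by (simp add: bil_eq_dot2(2) dot2_perp2_self)
  moreover have "bil a 1 (perp2 (bil_mat a 1 w)) z + bil a 1 ?x w = 0" "bil a 1 ?x z = 0"
    by (simp_all add: bil_eq_dot2(1) dot2_perp2_antisym dot2_perp2_self)
  ultimately show ?thesis
    using z R p \<open>\<not> multiple2 w z\<close>
    by (intro singular_zeroI[where u = "perp2 (bil_mat a 1 w)" and v = v and w = w])
      (simp_all add: in_zero_set_def nonzero2_perp2)
qed

lemma quad_grad_degenerate_imp_singular_zero:
  assumes z: "nonzero2 z" and g: "\<not> nonzero2 (quad_grad a z)" and P: "\<not> nonzero2 (bil_mat a 0 z)"
  shows "\<exists>x y. singular_zero a x y z"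
proof -
  define x where "x = (if nonzero2 (bil_mat a 1 z) then perp2 (bil_mat a 1 z) else vec2 1 0)"
  have "nonzero2 x"
    unfolding x_def by (simp add: nonzero2_perp2) (simp add: nonzero2_def)
  have "bil a 1 x z = 0"
    by (cases "nonzero2 (bil_mat a 1 z)")
      (simp_all add: x_def bil_eq_dot2(1) dot2_perp2_self, simp add: dot2_def nonzero2_def)
  consider "\<not> nonzero2 (bil_tmat a 2 x)"
    | "nonzero2 (bil_tmat a 2 x)" "\<not> nonzero2 (bil_mat a 1 z)"
    | "nonzero2 (bil_tmat a 2 x)" "nonzero2 (bil_mat a 1 z)"
    by blast
  then show ?thesis
  proof cases
    case 1
    then show ?thesis
      using singular_zero_degenerate_flat \<open>nonzero2 x\<close> z P \<open>bil a 1 x z = 0\<close> by blast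
  next
    case 2
    then show ?thesis
      using singular_zero_doubly_degenerate \<open>nonzero2 x\<close> z P by blast
  next
    case 3
    then show ?thesis
      using singular_zero_degenerate_transversal[OF z g P] by (auto simp: x_def)
  qed
qed

lemma quad_grad_imp_singular_zero:
  assumes "nonzero2 z" "\<not> nonzero2 (quad_grad a z)"
  shows "\<exists>x y. singular_zero a x y z"
proof -
  consider "nonzero2 (bil_mat a 0 z)" "nonzero2 (bil_mat a 1 z)"
    | "\<not> nonzero2 (bil_mat a 0 z)" | "\<not> nonzero2 (bil_mat (swap_xy a) 0 z)"
    by (auto simp: bil_mat_swap_xy)
  then show ?thesis
  proof cases
    case 1
    with assms show ?thesis
      using quad_grad_generic_imp_singular_zero by blast
  next
    case 2
    with assms show ?thesis
      by (rule quad_grad_degenerate_imp_singular_zero)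
  next
    case 3
    with assms obtain x y where "singular_zero (swap_xy a) x y z"
      using quad_grad_degenerate_imp_singular_zero[of z "swap_xy a"] by (auto simp: quad_grad_swap_xy)
    then show ?thesis
      by (auto simp: singular_zero_swap_xy)
  qed
qed

lemma exists_singular_zero_iff: "(\<exists>x y z. singular_zero a x y z) \<longleftrightarrow> quad_disc a = 0"
  unfolding quad_disc_eq_0_iff using singular_zero_imp_quad_grad quad_grad_imp_singular_zero by blast

section \<open>The discriminant polynomial\<close>

definition disc_poly :: cmpoly where
  "disc_poly = quad_disc mvar"

lemma (in comm_ring_hom) eval_mpoly_quad_disc: "eval_mpoly h v (quad_disc mvar) = quad_disc v"
  by (simp add: quad_disc_def quad_coeff0_def quad_coeff1_def quad_coeff2_def eval_mpoly_ring_simps)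

lemma mp_eval_disc_poly: "mp_eval disc_poly a = quad_disc a"
  using comm_ring_hom.eval_mpoly_quad_disc[OF comm_ring_hom_id]
  by (simp add: disc_poly_def mp_eval_eq_eval_mpoly)

lemma mp_vars_below_disc_poly: "mp_vars_below 12 disc_poly"
  unfolding disc_poly_def quad_disc_def quad_coeff0_def quad_coeff1_def quad_coeff2_def
  by (intro mp_vars_below_add mp_vars_below_diff mp_vars_below_mult mp_vars_below_mvar
      mp_vars_below_numeral; simp)

lemma homogeneous_disc_poly: "homogeneous 6 disc_poly"
proof -
  have c: "homogeneous 3 (quad_coeff0 mvar)" "homogeneous 3 (quad_coeff1 mvar)"
    "homogeneous 3 (quad_coeff2 mvar)"
    unfolding quad_coeff0_def quad_coeff1_def quad_coeff2_def
    by (intro homogeneous_add homogeneous_diff homogeneous_cubic)+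
  have "homogeneous (3 + 3) (quad_coeff1 mvar * quad_coeff1 mvar)"
    using c(2) c(2) by (rule homogeneous_mult)
  moreover have "homogeneous (0 + 3 + 3) (4 * quad_coeff0 mvar * quad_coeff2 mvar)"
    using homogeneous_mult[OF homogeneous_numeral c(1)] c(3) by (rule homogeneous_mult)
  ultimately show ?thesis
    unfolding disc_poly_def quad_disc_def by (intro homogeneous_diff) simp_all
qed

text \<open>The sections \<open>\<alpha> + t \<beta> + s \<gamma>\<close> of the proof idea, with \<open>t\<close> and \<open>s\<close> in an arbitrary ring;
  \<open>test_specialization\<close> takes them to be the variables of \<open>\<complex>[t][s]\<close>.\<close>

definition test_section :: "'a::comm_ring_1 \<Rightarrow> 'a \<Rightarrow> nat \<Rightarrow> 'a" where
  "test_section t s i =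
     (if i = 0 \<or> i = 9 then t else if i = 7 then - t else if i = 3 \<or> i = 4 then 1
      else if i = 6 \<or> i = 8 then - 1 else if i = 11 then s else 0)"

lemma quad_disc_test_section: "quad_disc (test_section t s) = (t ^ 3 - 1) ^ 2 - 4 * t ^ 2 * s"
  by (simp add: quad_disc_def quad_coeff0_def quad_coeff1_def quad_coeff2_def test_section_def
      algebra_simps power2_eq_square power3_eq_cube)

lemma quad_disc_test_section_slope: "quad_disc (\<lambda>i. coeff (test_section [:0, 1:] 0 i) 1) = (1::complex)"
  by (simp add: quad_disc_def quad_coeff0_def quad_coeff1_def quad_coeff2_def test_section_def One_nat_def)

lemma comm_ring_hom_const_const_poly: "comm_ring_hom (\<lambda>c. [:[:c:]:])"
  using comm_ring_hom_comp[OF comm_ring_hom_const_poly comm_ring_hom_const_poly] by (simp add: comp_def)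

definition test_specialization :: "cmpoly \<Rightarrow> complex poly poly" where
  "test_specialization p = eval_mpoly (\<lambda>c. [:[:c:]:]) (test_section [:[:0, 1:]:] [:0, 1:]) p"

lemma test_specialization_disc_poly:
  "test_specialization disc_poly = [:([:0, 1:] ^ 3 - 1) ^ 2, - 4 * [:0, 1:] ^ 2:]"
proof -
  interpret const: comm_ring_hom "\<lambda>c::complex poly. [:c:]"
    by (rule comm_ring_hom_const_poly)
  have "test_specialization disc_poly = ([:[:0, 1:]:] ^ 3 - 1) ^ 2 - 4 * [:[:0, 1:]:] ^ 2 * [:0, 1:]"
    unfolding test_specialization_def disc_poly_def
    by (simp add: comm_ring_hom.eval_mpoly_quad_disc[OF comm_ring_hom_const_const_poly]
        quad_disc_test_section)
  also have "\<dots> = [:([:0, 1:] ^ 3 - 1) ^ 2:] - [:4 * [:0, 1:] ^ 2:] * [:0, 1:]"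
    by (simp add: const.hom_power const.hom_diff const.hom_one const.hom_mult const.hom_numeral)
  also have "\<dots> = [:([:0, 1:] ^ 3 - 1) ^ 2, - 4 * [:0, 1:] ^ 2:]"
    by simp
  finally show ?thesis .
qed

lemma poly_test_specialization_at_0:
  "poly (test_specialization p) 0 = eval_mpoly (\<lambda>c. [:c:]) (test_section [:0, 1:] 0) p"
proof -
  have "poly (test_specialization p) 0 =
      eval_mpoly ((\<lambda>P. poly P 0) \<circ> (\<lambda>c. [:[:c:]:]))
        ((\<lambda>P. poly P 0) \<circ> test_section [:[:0, 1:]:] [:0, 1:]) p"
    unfolding test_specialization_def
    by (rule comm_ring_hom.eval_mpoly_comp[OF comm_ring_hom_const_const_poly comm_ring_hom_poly_at_0])
  also have "(\<lambda>P. poly P 0) \<circ> test_section [:[:0, 1:]:] [:0, 1:] = test_section [:0, 1:] 0"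
    by (simp add: test_section_def fun_eq_iff)
  finally show ?thesis
    by (simp add: comp_def)
qed

lemma degree_test_specialization_factor:
  assumes GQ: "test_specialization G * Q = [:([:0, 1:] ^ 3 - 1) ^ 2, - 4 * [:0, 1:] ^ 2:]"
    and G: "homogeneous d G" "d \<noteq> 0" "mp_eval G (\<lambda>i. coeff (test_section [:0, 1:] 0 i) 1) \<noteq> 0"
  shows "degree (test_specialization G) \<noteq> 0"
proof
  assume "degree (test_specialization G) = 0"
  then obtain g where g: "test_specialization G = [:g:]"
    using degree_0_id by metis
  with GQ have "smult g Q = [:([:0, 1:] ^ 3 - 1) ^ 2, - 4 * [:0, 1:] ^ 2:]"
    by simp
  from arg_cong[OF this, of "\<lambda>p. coeff p 0"] arg_cong[OF this, of "\<lambda>p. coeff p 1"]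
  have B: "g * coeff Q 0 = ([:0, 1:] ^ 3 - 1) ^ 2" and A: "g * coeff Q 1 = - 4 * [:0, 1:] ^ 2"
    by (simp_all add: One_nat_def)
  have "g = eval_mpoly (\<lambda>c. [:c:]) (test_section [:0, 1:] 0) G"
    using poly_test_specialization_at_0[of G] g by simp
  then have "coeff g d \<noteq> 0"
    using coeff_eval_mpoly_affine[OF G(1), of "test_section [:0, 1:] 0"] G(3)
    by (simp add: mp_eval_eq_eval_mpoly test_section_def)
  then have "degree g \<noteq> 0"
    using le_degree G(2) by fastforce
  then have "\<not> constant (poly g)"
    by (simp add: constant_degree)
  then obtain r where r: "poly g r = 0"
    using fundamental_theorem_of_algebra by blast
  then have "poly (g * coeff Q 1) r = 0" "poly (g * coeff Q 0) r = 0"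
    by simp_all
  then have "- 4 * r ^ 2 = 0" "poly (([:0, 1:] ^ 3 - 1) ^ 2) r = (0::complex)"
    unfolding A B by simp_all
  then have "poly (([:0, 1:] ^ 3 - 1) ^ 2) 0 = (0::complex)"
    by simp
  then show False
    by simp
qed

lemma mp_eval_disc_poly_test_slope: "mp_eval disc_poly (\<lambda>i. coeff (test_section [:0, 1:] 0 i) 1) = 1"
  by (simp add: mp_eval_disc_poly quad_disc_test_section_slope)

lemma disc_poly_nonzero: "disc_poly \<noteq> 0"
  using mp_eval_disc_poly_test_slope by (auto simp: mp_eval_def)

lemma not_unit_disc_poly: "\<not> disc_poly dvd 1"
proof
  assume "disc_poly dvd 1"
  then obtain E where "1 = disc_poly * E"
    by (rule dvdE)
  from arg_cong[OF this, of "\<lambda>p. mp_eval p (\<lambda>_. 0)"] show False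
    by (simp add: mp_eval_mult mp_eval_one mp_eval_disc_poly
        quad_disc_def quad_coeff0_def quad_coeff1_def quad_coeff2_def)
qed

lemma test_specialization_factors:
  assumes "disc_poly = G * H"
  shows "test_specialization G * test_specialization H = [:([:0, 1:] ^ 3 - 1) ^ 2, - 4 * [:0, 1:] ^ 2:]"
  using test_specialization_disc_poly
  by (simp add: assms test_specialization_def
      comm_ring_hom.eval_mpoly_mult[OF comm_ring_hom_const_const_poly])

lemma degree_test_specialization_nonunit_factor:
  assumes GH: "disc_poly = G * H" and "\<not> G dvd 1"
  shows "degree (test_specialization G) \<noteq> 0"
proof -
  have "G \<noteq> 0" "G * H \<noteq> 0"
    using GH disc_poly_nonzero by auto
  then have G: "homogeneous (degree (grade G)) G"
    using homogeneous_factor(1)[of 6 G H] homogeneous_disc_poly GH by simp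
  have "degree (grade G) \<noteq> 0"
  proof
    assume "degree (grade G) = 0"
    with G \<open>G \<noteq> 0\<close> have "G dvd 1"
      by (simp add: homogeneous_0_imp_unit)
    with \<open>\<not> G dvd 1\<close> show False ..
  qed
  moreover have "mp_eval G (\<lambda>i. coeff (test_section [:0, 1:] 0 i) 1) \<noteq> 0"
    using mp_eval_disc_poly_test_slope unfolding GH mp_eval_mult by auto
  ultimately show ?thesis
    using degree_test_specialization_factor[OF test_specialization_factors[OF GH] G] by blast
qed

lemma irreducible_disc_poly: "irreducible disc_poly"
proof (rule irreducibleI)
  fix G H
  assume GH: "disc_poly = G * H"
  show "G dvd 1 \<or> H dvd 1"
  proof (rule ccontr)
    assume "\<not> (G dvd 1 \<or> H dvd 1)"
    then have "degree (test_specialization G) \<noteq> 0" "degree (test_specialization H) \<noteq> 0"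
      using degree_test_specialization_nonunit_factor GH by (metis mult.commute)+
    have spec:
      "test_specialization G * test_specialization H = [:([:0, 1:] ^ 3 - 1) ^ 2, - 4 * [:0, 1:] ^ 2:]"
      using GH by (rule test_specialization_factors)
    moreover have "test_specialization G \<noteq> 0" "test_specialization H \<noteq> 0"
      using spec by auto
    ultimately have "degree (test_specialization G) + degree (test_specialization H) = 1"
      by (simp flip: degree_mult_eq add: One_nat_def)
    then show False
      using \<open>degree (test_specialization G) \<noteq> 0\<close> \<open>degree (test_specialization H) \<noteq> 0\<close> by linarith
  qed
qed (use disc_poly_nonzero not_unit_disc_poly in auto)

theorem theorem3p11:
  shows "\<exists>D :: cmpoly. mp_vars_below 12 D \<and> mp_homogeneous 6 D \<and> irreducible D \<and>
           (\<forall>a. (\<exists>i<12. a i \<noteq> 0) \<longrightarrow> (a \<in> discriminant \<longleftrightarrow> mp_eval D a = 0))"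
proof (intro exI[of _ disc_poly] conjI allI impI)
  show "mp_vars_below 12 disc_poly"
    by (rule mp_vars_below_disc_poly)
  show "irreducible disc_poly"
    by (rule irreducible_disc_poly)
  then show "mp_homogeneous 6 disc_poly"
    using homogeneous_disc_poly by (simp add: mp_homogeneous_def homogeneous_def irreducible_def)
  fix a :: "nat \<Rightarrow> complex"
  assume "\<exists>i<12. a i \<noteq> 0"
  then show "a \<in> discriminant \<longleftrightarrow> mp_eval disc_poly a = 0"
    by (simp add: discriminant_def mp_eval_disc_poly exists_singular_zero_iff)
qed

end
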